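(* For every base $b\ge 2$ there exist infinitely many $b$-wMRH numbers, and infinitely many distinct integers $A\ge 0$ that occur as multiplicative extra terms of some $b$-wMRH number.
   Context: Fix a base $b\ge 2$. $s_b(N)$ is the sum of the base-$b$ digits of $N$. For a positive integer $X$, its reversal $X^R$ is the integer whose base-$b$ representation is that of $X$ written in reverse order (leading zeros of the result are dropped). A positive integer $N$ is a $b$-wMRH number if there exists an integer $A\ge 0$, called a multiplicative extra term of $N$, such that $N=(A+s_b(N))\cdot(A+s_b(N))^R$. *)

theory Defs
  imports Main
begin

fun digits :: "nat \<Rightarrow> nat \<Rightarrow> nat list" where
  "digits b n = (if b < 2 \<or> n = 0 then [] else n mod b # digits b (n div b))"

declare digits.simps [simp del]

definition from_digits :: "nat \<Rightarrow> nat list \<Rightarrow> nat" where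
  "from_digits b ds = foldr (\<lambda>d acc. d + b * acc) ds 0"

definition digit_sum :: "nat \<Rightarrow> nat \<Rightarrow> nat" where
  "digit_sum b n = sum_list (digits b n)"

(* reversal: write the base-b representation backwards; leading zeros vanish *)
definition reversal :: "nat \<Rightarrow> nat \<Rightarrow> nat" where
  "reversal b n = from_digits b (rev (digits b n))"

definition mult_extra_term :: "nat \<Rightarrow> nat \<Rightarrow> nat \<Rightarrow> bool" where
  "mult_extra_term b N A \<longleftrightarrow>
     N = (A + digit_sum b N) * reversal b (A + digit_sum b N)"

definition wMRH :: "nat \<Rightarrow> nat \<Rightarrow> bool" where
  "wMRH b N \<longleftrightarrow> N > 0 \<and> (\<exists>A. mult_extra_term b N A)"

end

theory Submission
  imports Defs
begin

text \<open>A power \<open>b^k\<close> has the digits \<open>10\<dots>0\<close>, so its digit sum and its reversal are both 1.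
  Hence \<open>A = b^k - 1\<close> is a multiplicative extra term of \<open>N = b^k\<close>:
  \<open>A + s\<^sub>b(N) = b^k\<close> and \<open>b^k \<cdot> (b^k)\<^sup>R = b^k\<close>. Distinct \<open>k\<close> give distinct \<open>N\<close> and \<open>A\<close>.\<close>

lemma digits_power:
  assumes "b \<ge> 2"
  shows "digits b (b ^ k) = replicate k 0 @ [1]"
proof (induction k)
  case 0
  show ?case using assms by (subst digits.simps) (simp add: digits.simps)
next
  case (Suc k)
  have "digits b (b ^ Suc k) = 0 # digits b (b ^ k)"
    using assms by (subst digits.simps) simp
  with Suc.IH show ?case by simp
qed

lemma from_digits_replicate_zero: "from_digits b (replicate k 0) = 0"
  by (induction k) (simp_all add: from_digits_def)

lemma digit_sum_power: "b \<ge> 2 \<Longrightarrow> digit_sum b (b ^ k) = 1"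
  by (simp add: digit_sum_def digits_power)

lemma reversal_power: "b \<ge> 2 \<Longrightarrow> reversal b (b ^ k) = 1"
  using from_digits_replicate_zero[of b k]
  by (simp add: reversal_def digits_power from_digits_def)

lemma mult_extra_term_power:
  assumes "b \<ge> 2"
  shows "mult_extra_term b (b ^ k) (b ^ k - 1)"
proof -
  have "b ^ k - 1 + digit_sum b (b ^ k) = b ^ k"
    using assms by (simp add: digit_sum_power)
  then show ?thesis
    unfolding mult_extra_term_def using assms by (simp add: reversal_power)
qed

lemma wMRH_power: "b \<ge> 2 \<Longrightarrow> wMRH b (b ^ k)"
  unfolding wMRH_def using mult_extra_term_power by auto

lemma inj_power_base:
  fixes b :: nat
  assumes "b \<ge> 2"
  shows "inj (\<lambda>k. b ^ k)"
  using assms by (auto intro: injI)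

lemma inj_power_base_minus_one:
  fixes b :: nat
  assumes "b \<ge> 2"
  shows "inj (\<lambda>k. b ^ k - 1)"
proof (rule injI)
  fix x y :: nat
  assume "b ^ x - 1 = b ^ y - 1"
  moreover have "b ^ x > 0" "b ^ y > 0" using assms by simp_all
  ultimately have "b ^ x = b ^ y" by linarith
  then show "x = y" using assms by simp
qed

theorem proposition17:
  fixes b :: nat
  assumes "b \<ge> 2"
  shows "infinite {N. wMRH b N} \<and>
         infinite {A. \<exists>N. wMRH b N \<and> mult_extra_term b N A}"
proof
  have "range (\<lambda>k. b ^ k) \<subseteq> {N. wMRH b N}"
    using wMRH_power[OF assms] by auto
  with inj_power_base[OF assms] show "infinite {N. wMRH b N}"
    using infinite_iff_countable_subset by blast
  have "range (\<lambda>k. b ^ k - 1) \<subseteq> {A. \<exists>N. wMRH b N \<and> mult_extra_term b N A}"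
    using wMRH_power[OF assms] mult_extra_term_power[OF assms] by blast
  with inj_power_base_minus_one[OF assms]
  show "infinite {A. \<exists>N. wMRH b N \<and> mult_extra_term b N A}"
    using infinite_iff_countable_subset by blast
qed

end
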